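(* Let $T$ be a tree. The following are equivalent: (i) $T$ is rooted and Dedekind complete; (ii) any two elements of $T$ have a greatest lower bound; (iii) every nonempty subset of $T$ has a greatest lower bound.
   Context: A tree is a partially ordered set in which the set of predecessors of each element is well-ordered. $T$ is rooted if it has exactly one minimal element. For a chain $C$ that is bounded above, its pseudo-supremum is the set of minimal elements of the set of upper bounds of $C$. $T$ is Dedekind complete if the pseudo-supremum of every nonempty chain that is bounded above is a supremum, i.e. consists of a single element (the least upper bound). *)

theory Defs
  imports Main
begin

text \<open>The tree is the whole type 'a, ordered by the partial order of class order.\<close>

definition well_ordered_set :: "'a::order set \<Rightarrow> bool" where
  "well_ordered_set S \<longleftrightarrow>
     (\<forall>a\<in>S. \<forall>b\<in>S. a \<le> b \<or> b \<le> a) \<and>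
     (\<forall>A. A \<subseteq> S \<and> A \<noteq> {} \<longrightarrow> (\<exists>m\<in>A. \<forall>a\<in>A. m \<le> a))"

definition is_tree :: "'a::order itself \<Rightarrow> bool" where
  "is_tree _ \<longleftrightarrow> (\<forall>x::'a. well_ordered_set {y. y < x})"

definition minimal_elem :: "'a::order \<Rightarrow> bool" where
  "minimal_elem r \<longleftrightarrow> \<not> (\<exists>y. y < r)"

definition rooted :: "'a::order itself \<Rightarrow> bool" where
  "rooted _ \<longleftrightarrow> (\<exists>!r::'a. minimal_elem r)"

definition is_chain :: "'a::order set \<Rightarrow> bool" where
  "is_chain C \<longleftrightarrow> (\<forall>a\<in>C. \<forall>b\<in>C. a \<le> b \<or> b \<le> a)"

definition upper_bounds :: "'a::order set \<Rightarrow> 'a set" where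
  "upper_bounds C = {u. \<forall>c\<in>C. c \<le> u}"

definition pseudo_sup :: "'a::order set \<Rightarrow> 'a set" where
  "pseudo_sup C = {u \<in> upper_bounds C. \<not> (\<exists>v \<in> upper_bounds C. v < u)}"

definition dedekind_complete :: "'a::order itself \<Rightarrow> bool" where
  "dedekind_complete _ \<longleftrightarrow>
     (\<forall>C::'a set. is_chain C \<and> C \<noteq> {} \<and> upper_bounds C \<noteq> {} \<longrightarrow>
        (\<exists>s. pseudo_sup C = {s}))"

definition is_glb :: "'a::order set \<Rightarrow> 'a \<Rightarrow> bool" where
  "is_glb A g \<longleftrightarrow> (\<forall>a\<in>A. g \<le> a) \<and> (\<forall>l. (\<forall>a\<in>A. l \<le> a) \<longrightarrow> l \<le> g)"

end

theory Submission
  imports Defs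
begin

text \<open>
  In a tree every principal down-set \<open>{u. u \<le> x}\<close> is well-ordered, so every nonempty set
  that is bounded above has a least element.
  (i) \<open>\<Rightarrow>\<close> (ii): the common lower bounds of \<open>x\<close> and \<open>y\<close> form a chain, nonempty because it
  contains the root and bounded above by \<open>x\<close>. Below any upper bound \<open>w\<close> of a chain, the least
  upper bound that is \<open>\<le> w\<close> is an element of the pseudo-supremum, so a unique pseudo-supremum
  lies below every upper bound; for the chain of common lower bounds it is the meet of \<open>x\<close> and \<open>y\<close>.
  (ii) \<open>\<Rightarrow>\<close> (iii): for \<open>a \<in> A\<close> the meets of \<open>a\<close> with the elements of \<open>A\<close> all lie below \<open>a\<close>,
  and the least of them is the greatest lower bound of \<open>A\<close>.
  (iii) \<open>\<Rightarrow>\<close> (i): the greatest lower bound of the whole tree is its root, and the greatest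
  lower bound of the upper bounds of a chain is its supremum.
\<close>

lemma well_ordered_set_insert_top:
  assumes wo: "well_ordered_set S" and top: "\<forall>s\<in>S. s < x"
  shows "well_ordered_set (insert x S)"
  unfolding well_ordered_set_def
proof (intro conjI allI impI)
  have chain: "\<forall>a\<in>S. \<forall>b\<in>S. a \<le> b \<or> b \<le> a"
    using wo unfolding well_ordered_set_def by blast
  have "a \<le> b \<or> b \<le> a" if "a \<in> insert x S" "b \<in> insert x S" for a b
    using that chain top by (cases "a = x"; cases "b = x") (auto dest: less_imp_le)
  then show "\<forall>a\<in>insert x S. \<forall>b\<in>insert x S. a \<le> b \<or> b \<le> a" by blast
next
  fix A assume A: "A \<subseteq> insert x S \<and> A \<noteq> {}"
  show "\<exists>m\<in>A. \<forall>a\<in>A. m \<le> a"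
  proof (cases "A - {x} = {}")
    case True
    then show ?thesis using A by auto
  next
    case False
    moreover have "A - {x} \<subseteq> S" using A by blast
    ultimately obtain m where m: "m \<in> A - {x}" "\<forall>a\<in>A - {x}. m \<le> a"
      using wo unfolding well_ordered_set_def by blast
    have "m \<le> x" using m A top by (auto intro: less_imp_le)
    then show ?thesis using m by blast
  qed
qed

lemma tree_atMost_well_ordered:
  assumes "is_tree TYPE('a::order)"
  shows "well_ordered_set {u::'a. u \<le> x}"
proof -
  have "{u. u \<le> x} = insert x {u. u < x}" by (auto simp: le_less)
  then show ?thesis
    using assms well_ordered_set_insert_top unfolding is_tree_def by fastforce
qed

lemma tree_has_least_below:
  assumes "is_tree TYPE('a::order)" "S \<subseteq> {u::'a. u \<le> x}" "S \<noteq> {}"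
  shows "\<exists>m\<in>S. \<forall>s\<in>S. m \<le> s"
  using tree_atMost_well_ordered[OF assms(1), of x] assms(2,3)
  unfolding well_ordered_set_def by blast

lemma tree_chain_below:
  assumes "is_tree TYPE('a::order)" "C \<subseteq> {u::'a. u \<le> x}"
  shows "is_chain C"
  using tree_atMost_well_ordered[OF assms(1), of x] assms(2)
  unfolding well_ordered_set_def is_chain_def by blast

lemma tree_minimal_below:
  assumes "is_tree TYPE('a::order)"
  shows "\<exists>m. minimal_elem m \<and> m \<le> (x::'a)"
proof -
  obtain m where m: "m \<le> x" "\<forall>u. u \<le> x \<longrightarrow> m \<le> u"
    using tree_has_least_below[OF assms, of "{u. u \<le> x}" x] by auto
  have "minimal_elem m"
    unfolding minimal_elem_def using m by (meson less_le_not_le order.trans)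
  with m show ?thesis by blast
qed

lemma rooted_tree_has_least:
  assumes "is_tree TYPE('a::order)" "rooted TYPE('a)"
  shows "\<exists>r::'a. \<forall>x. r \<le> x"
  using assms(2) tree_minimal_below[OF assms(1)] unfolding rooted_def by metis

lemma rooted_if_least:
  assumes "\<forall>x. r \<le> (x::'a::order)"
  shows "rooted TYPE('a)"
proof -
  have "minimal_elem r" using assms unfolding minimal_elem_def by (meson leD)
  moreover have "r' = r" if "minimal_elem r'" for r'
    using that assms unfolding minimal_elem_def by (metis order.not_eq_order_implies_strict)
  ultimately show ?thesis unfolding rooted_def by blast
qed

lemma tree_pseudo_sup_below_upper_bound:
  assumes "is_tree TYPE('a::order)" and w: "w \<in> upper_bounds (C::'a set)"
  shows "\<exists>s\<in>pseudo_sup C. s \<le> w"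
proof -
  obtain m where m: "m \<in> upper_bounds C" "m \<le> w"
    and least: "\<forall>u\<in>upper_bounds C. u \<le> w \<longrightarrow> m \<le> u"
    using tree_has_least_below[OF assms(1), of "{u \<in> upper_bounds C. u \<le> w}" w] w by auto
  have "\<not> (\<exists>v\<in>upper_bounds C. v < m)"
    using least m(2) by (meson less_le_not_le order.trans)
  with m show ?thesis unfolding pseudo_sup_def by blast
qed

lemma pseudo_sup_glb_upper_bounds:
  assumes "is_glb (upper_bounds C) g"
  shows "pseudo_sup C = {g}"
proof -
  have "g \<in> upper_bounds C"
    using assms unfolding is_glb_def upper_bounds_def by auto
  then show ?thesis
    using assms unfolding pseudo_sup_def is_glb_def
    by (auto dest: leD simp: order.order_iff_strict)
qed

lemma rooted_dedekind_complete_if_glbs: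
  assumes glbs: "\<forall>A :: 'a::order set. A \<noteq> {} \<longrightarrow> (\<exists>g. is_glb A g)"
  shows "rooted TYPE('a) \<and> dedekind_complete TYPE('a)"
proof
  obtain r :: 'a where "is_glb UNIV r" using glbs by blast
  then have "\<forall>x. r \<le> x" unfolding is_glb_def by simp
  then show "rooted TYPE('a)" by (rule rooted_if_least)
  show "dedekind_complete TYPE('a)"
    using glbs pseudo_sup_glb_upper_bounds unfolding dedekind_complete_def by metis
qed

lemma rooted_dedekind_complete_tree_glb_pairs:
  assumes T: "is_tree TYPE('a::order)"
    and R: "rooted TYPE('a)" and D: "dedekind_complete TYPE('a)"
  shows "\<forall>x y :: 'a. \<exists>g. is_glb {x, y} g"
proof (intro allI)
  fix x y :: 'a
  define L where "L = {z. z \<le> x \<and> z \<le> y}"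
  have "is_chain L" using tree_chain_below[OF T, of L x] unfolding L_def by blast
  moreover have "L \<noteq> {}" using rooted_tree_has_least[OF T R] unfolding L_def by blast
  moreover have xy: "x \<in> upper_bounds L" "y \<in> upper_bounds L"
    unfolding upper_bounds_def L_def by auto
  ultimately obtain s where s: "pseudo_sup L = {s}"
    using D unfolding dedekind_complete_def by blast
  have "s \<le> x" "s \<le> y"
    using xy tree_pseudo_sup_below_upper_bound[OF T] s by fastforce+
  moreover have "s \<in> upper_bounds L" using s unfolding pseudo_sup_def by auto
  ultimately have "is_glb {x, y} s"
    unfolding is_glb_def upper_bounds_def L_def by auto
  then show "\<exists>g. is_glb {x, y} g" by blast
qed

lemma tree_glbs_if_glb_pairs:
  assumes T: "is_tree TYPE('a::order)"
    and G: "\<forall>x y :: 'a. \<exists>g. is_glb {x, y} g"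
  shows "\<forall>A :: 'a set. A \<noteq> {} \<longrightarrow> (\<exists>g. is_glb A g)"
proof (intro allI impI)
  fix A :: "'a set"
  assume "A \<noteq> {}"
  then obtain a where a: "a \<in> A" by blast
  obtain meet where meet: "\<And>b. is_glb {a, b} (meet b)" using G by metis
  then have meet_le: "\<And>b. meet b \<le> a" "\<And>b. meet b \<le> b" unfolding is_glb_def by auto
  obtain b where b: "b \<in> A" and least: "\<forall>c\<in>A. meet b \<le> meet c"
    using tree_has_least_below[OF T, of "meet ` A" a] a meet_le by auto
  have "is_glb A (meet b)"
    unfolding is_glb_def
  proof (intro conjI allI impI ballI)
    show "meet b \<le> c" if "c \<in> A" for c
      using that least meet_le order.trans by blast
    show "l \<le> meet b" if "\<forall>c\<in>A. l \<le> c" for l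
      using that a b meet[of b] unfolding is_glb_def by auto
  qed
  then show "\<exists>g. is_glb A g" by blast
qed

theorem theorem3p1:
  assumes "is_tree TYPE('a::order)"
  shows "((rooted TYPE('a) \<and> dedekind_complete TYPE('a))
            \<longleftrightarrow> (\<forall>x y :: 'a. \<exists>g. is_glb {x, y} g))
       \<and> ((\<forall>x y :: 'a. \<exists>g. is_glb {x, y} g)
            \<longleftrightarrow> (\<forall>A :: 'a set. A \<noteq> {} \<longrightarrow> (\<exists>g. is_glb A g)))"
proof -
  have glb_pairs_if_glbs: "\<forall>x y :: 'a. \<exists>g. is_glb {x, y} g"
    if "\<forall>A :: 'a set. A \<noteq> {} \<longrightarrow> (\<exists>g. is_glb A g)"
    using that by (metis insert_not_empty)
  \<comment> \<open>\<open>'a\<close> occurs in the conclusion of \<open>rooted_dedekind_complete_if_glbs\<close> only via \<open>TYPE('a)\<close>;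
    without the explicit instantiation \<open>blast\<close> cannot find the type and loops.\<close>
  show ?thesis
    using rooted_dedekind_complete_tree_glb_pairs[OF assms] tree_glbs_if_glb_pairs[OF assms]
      rooted_dedekind_complete_if_glbs[where 'a = 'a] glb_pairs_if_glbs
    by blast
qed

end
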